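(* Let $(\pi_k)_{k=0}^K$ be deterministic policies on an MDP as in the context, with $q^{\pi'_k}$, $v^{\pi'_k}$, $\sigma_k^2$ and $\Sigma_k^2$ defined in the context. Then for every $k\in\{1,\dots,K\}$, $$\Sigma_k^2 = \gamma^2\sigma_k^2 + \gamma^2P^{\pi_{k-1}}\Sigma_{k-1}^2.$$
   Context: MDP: finite state set $\mathcal{X}$, finite action set $\mathcal{A}$, discount $\gamma\in[0,1)$, reward $r\in[-1,1]^{\mathcal{X}\times\mathcal{A}}$, transition kernel $P(y|x,a)$. $(Pv)(x,a)=\sum_yP(y|x,a)v(y)$; for a policy $\pi$, $(\pi q)(x)=\sum_a\pi(a|x)q(x,a)$ and $(P^\pi q)(x,a) = (P\pi q)(x,a)$; $q^\pi$ is the unique fixed point of $q\mapsto r+\gamma P^\pi q$, $v^\pi=\pi q^\pi$. Definitions: $q^{\pi'_0}:=q^{\pi_0}$; $v^{\pi'_k} := \pi_kq^{\pi'_k}$; $q^{\pi'_k}:=r+\gamma Pv^{\pi'_{k-1}}$ for $k\in[K]$. $\sigma_0^2 := P(v^{\pi_0})^2-(Pv^{\pi_0})^2$ and $\sigma_k^2 := P(v^{\pi'_{k-1}})^2 - (Pv^{\pi'_{k-1}})^2$ for $k\in[K]$. For $k\in\{0,\dots,K\}$ and $(x,a)$, let $(X_t,A_t)_{t\ge0}$ be the process with $X_0=x$, $A_0=a$, $X_{t+1}\sim P(\cdot|X_t,A_t)$, $A_t = \pi_{k-t}(X_t)$ for $1\le t\le k$ and $A_t=\pi_0(X_t)$ for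 $t>k$, and define $\Sigma_k^2(x,a) := \mathbb{E}\big[(\sum_{t=0}^\infty\gamma^t r(X_t,A_t) - q^{\pi'_k}(x,a))^2\big]$. *)

theory Defs
  imports "HOL-Probability.Probability"
begin

text \<open>Finite MDP: states of finite type 'x, actions of finite type 'a,
  transition kernel P x a (a pmf on next states), reward r, discount g.
  Deterministic policies are functions 'x \<Rightarrow> 'a; a sequence of them is
  indexed by nat (only indices 0..K matter).\<close>

definition Pop :: "('x::finite \<Rightarrow> 'a \<Rightarrow> 'x pmf) \<Rightarrow> ('x \<Rightarrow> real) \<Rightarrow> 'x \<Rightarrow> 'a \<Rightarrow> real" where
  "Pop P v x a = (\<Sum>y\<in>UNIV. pmf (P x a) y * v y)"

definition polv :: "('x \<Rightarrow> 'a) \<Rightarrow> ('x \<Rightarrow> 'a \<Rightarrow> real) \<Rightarrow> 'x \<Rightarrow> real" where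
  "polv pol q x = q x (pol x)"

definition Ppol :: "('x::finite \<Rightarrow> 'a \<Rightarrow> 'x pmf) \<Rightarrow> ('x \<Rightarrow> 'a) \<Rightarrow> ('x \<Rightarrow> 'a \<Rightarrow> real) \<Rightarrow> 'x \<Rightarrow> 'a \<Rightarrow> real" where
  "Ppol P pol q = Pop P (polv pol q)"

definition qpi :: "('x::finite \<Rightarrow> 'a \<Rightarrow> 'x pmf) \<Rightarrow> ('x \<Rightarrow> 'a \<Rightarrow> real) \<Rightarrow> real \<Rightarrow> ('x \<Rightarrow> 'a) \<Rightarrow> 'x \<Rightarrow> 'a \<Rightarrow> real" where
  "qpi P r g pol = (THE q. \<forall>x a. q x a = r x a + g * Ppol P pol q x a)"

fun qprime :: "('x::finite \<Rightarrow> 'a \<Rightarrow> 'x pmf) \<Rightarrow> ('x \<Rightarrow> 'a \<Rightarrow> real) \<Rightarrow> real \<Rightarrow> (nat \<Rightarrow> 'x \<Rightarrow> 'a) \<Rightarrow> nat \<Rightarrow> 'x \<Rightarrow> 'a \<Rightarrow> real" where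
  "qprime P r g pols 0 = qpi P r g (pols 0)"
| "qprime P r g pols (Suc k) =
     (\<lambda>x a. r x a + g * Pop P (polv (pols k) (qprime P r g pols k)) x a)"

definition vprime :: "('x::finite \<Rightarrow> 'a \<Rightarrow> 'x pmf) \<Rightarrow> ('x \<Rightarrow> 'a \<Rightarrow> real) \<Rightarrow> real \<Rightarrow> (nat \<Rightarrow> 'x \<Rightarrow> 'a) \<Rightarrow> nat \<Rightarrow> 'x \<Rightarrow> real" where
  "vprime P r g pols k = polv (pols k) (qprime P r g pols k)"

definition sigma2 :: "('x::finite \<Rightarrow> 'a \<Rightarrow> 'x pmf) \<Rightarrow> ('x \<Rightarrow> 'a \<Rightarrow> real) \<Rightarrow> real \<Rightarrow> (nat \<Rightarrow> 'x \<Rightarrow> 'a) \<Rightarrow> nat \<Rightarrow> 'x \<Rightarrow> 'a \<Rightarrow> real" where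
  "sigma2 P r g pols k =
     (let v = (if k = 0 then polv (pols 0) (qpi P r g (pols 0)) else vprime P r g pols (k - 1))
      in (\<lambda>x a. Pop P (\<lambda>y. (v y)\<^sup>2) x a - (Pop P v x a)\<^sup>2))"

text \<open>Probability space for the process: at every time t an independent
  random "transition table" w t :: 'x \<times> 'a \<Rightarrow> 'x is drawn with
  w t (x,a) ~ P(.|x,a) independently over (x,a). Then X_{t+1} = w t (X_t, A_t)
  has exactly the Markov law X_{t+1} ~ P(.|X_t,A_t).\<close>
definition table_pmf :: "('x::finite \<Rightarrow> 'a::finite \<Rightarrow> 'x pmf) \<Rightarrow> ('x \<times> 'a \<Rightarrow> 'x) pmf" where
  "table_pmf P = Pi_pmf UNIV undefined (\<lambda>(x, a). P x a)"

definition path_space :: "('x::finite \<Rightarrow> 'a::finite \<Rightarrow> 'x pmf) \<Rightarrow> (nat \<Rightarrow> ('x \<times> 'a \<Rightarrow> 'x)) measure" where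
  "path_space P = PiM UNIV (\<lambda>_. measure_pmf (table_pmf P))"

definition act :: "(nat \<Rightarrow> 'x \<Rightarrow> 'a) \<Rightarrow> nat \<Rightarrow> nat \<Rightarrow> 'x \<Rightarrow> 'a" where
  "act pols k t y = (if t \<le> k then pols (k - t) y else pols 0 y)"

fun traj :: "(nat \<Rightarrow> 'x \<Rightarrow> 'a) \<Rightarrow> nat \<Rightarrow> 'x \<Rightarrow> 'a \<Rightarrow> (nat \<Rightarrow> ('x \<times> 'a \<Rightarrow> 'x)) \<Rightarrow> nat \<Rightarrow> 'x \<times> 'a" where
  "traj pols k x a w 0 = (x, a)"
| "traj pols k x a w (Suc t) =
     (let y = w t (traj pols k x a w t) in (y, act pols k (Suc t) y))"

definition Sigma2 :: "('x::finite \<Rightarrow> 'a::finite \<Rightarrow> 'x pmf) \<Rightarrow> ('x \<Rightarrow> 'a \<Rightarrow> real) \<Rightarrow> real \<Rightarrow> (nat \<Rightarrow> 'x \<Rightarrow> 'a) \<Rightarrow> nat \<Rightarrow> 'x \<Rightarrow> 'a \<Rightarrow> real" where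
  "Sigma2 P r g pols k x a =
     (\<integral>w. ((\<Sum>t. g ^ t * case_prod r (traj pols k x a w t)) - qprime P r g pols k x a)\<^sup>2 \<partial>path_space P)"

end

theory Submission
  imports Defs
begin

text \<open>The process is realised on a space on which an independent random transition table is
  drawn at every time step, so the path space is the product of the first table with a copy of
  itself. Along a path, the return of schedule k from (x, a) is r(x, a) plus \<gamma> times the return
  of schedule k - 1 started at the next state y with action \<pi>_{k-1}(y), driven by the shifted
  tables. Taking expectations shows that the mean return is q^{\<pi>'_k}, the base case resting on
  the uniqueness of the fixed point of q \<mapsto> r + \<gamma> P^{\<pi>_0} q for \<gamma> < 1. Conditioning on y
  and splitting E[(Z - c)^2] = Var Z + (E Z - c)^2 with c = (P v^{\<pi>'_{k-1}})(x, a) then yields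
  the recursion, the term (E Z - c)^2 averaging to \<sigma>_k^2.\<close>

lemma Pop_const [simp]: "Pop P (\<lambda>_. c) x a = c"
  by (simp add: Pop_def sum_pmf_eq_1 flip: sum_distrib_right)

lemma Pop_add: "Pop P (\<lambda>y. f y + h y) x a = Pop P f x a + Pop P h x a"
  by (simp add: Pop_def distrib_left sum.distrib)

lemma Pop_diff: "Pop P (\<lambda>y. f y - h y) x a = Pop P f x a - Pop P h x a"
  by (simp add: Pop_def right_diff_distrib sum_subtractf)

lemma Pop_cmult: "Pop P (\<lambda>y. c * f y) x a = c * Pop P f x a"
  by (simp add: Pop_def sum_distrib_left mult.left_commute)

lemma Pop_sq_dev:
  "Pop P (\<lambda>y. (v y - Pop P v x a)\<^sup>2) x a = Pop P (\<lambda>y. (v y)\<^sup>2) x a - (Pop P v x a)\<^sup>2"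
proof -
  let ?c = "Pop P v x a"
  have "(\<lambda>y. (v y - ?c)\<^sup>2) = (\<lambda>y. ((v y)\<^sup>2 - (2 * ?c) * v y) + ?c\<^sup>2)"
    by (simp add: fun_eq_iff power2_diff)
  then show ?thesis
    by (simp add: Pop_add Pop_diff Pop_cmult power2_eq_square)
qed

lemma abs_Pop_le:
  assumes "\<And>y. \<bar>v y\<bar> \<le> m"
  shows "\<bar>Pop P v x a\<bar> \<le> m"
proof -
  have "\<bar>Pop P v x a\<bar> \<le> Pop P (\<lambda>y. \<bar>v y\<bar>) x a"
    unfolding Pop_def by (rule order_trans[OF sum_abs]) (simp add: abs_mult)
  also have "\<dots> \<le> Pop P (\<lambda>_. m) x a"
    unfolding Pop_def by (intro sum_mono mult_left_mono assms) simp
  finally show ?thesis by simp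
qed

lemma Ppol_fixed_point_unique:
  fixes q1 q2 :: "'x::finite \<Rightarrow> 'a::finite \<Rightarrow> real"
  assumes "0 \<le> g" "g < 1"
    and q1: "\<And>x a. q1 x a = r x a + g * Ppol P pol q1 x a"
    and q2: "\<And>x a. q2 x a = r x a + g * Ppol P pol q2 x a"
  shows "q1 = q2"
proof -
  define d where "d x a = \<bar>q1 x a - q2 x a\<bar>" for x a
  define m where "m = Max (range (case_prod d))"
  have d_le_m: "d x a \<le> m" for x a
    unfolding m_def by (rule Max_ge) auto
  have d_le: "d x a \<le> g * m" for x a
  proof -
    have "q1 x a - q2 x a = g * Pop P (\<lambda>y. q1 y (pol y) - q2 y (pol y)) x a"
      by (subst q1, subst q2) (simp add: Ppol_def polv_def[abs_def] Pop_diff right_diff_distrib)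
    then have "d x a = g * \<bar>Pop P (\<lambda>y. q1 y (pol y) - q2 y (pol y)) x a\<bar>"
      using \<open>0 \<le> g\<close> by (simp add: d_def abs_mult)
    also have "\<dots> \<le> g * m"
      using d_le_m \<open>0 \<le> g\<close> by (intro mult_left_mono abs_Pop_le) (simp_all add: d_def)
    finally show ?thesis .
  qed
  have "m \<in> range (case_prod d)"
    unfolding m_def by (rule Max_in) auto
  then obtain x0 a0 where "m = d x0 a0"
    by auto
  with d_le[of x0 a0] have "(1 - g) * m \<le> 0"
    by (simp add: algebra_simps)
  with \<open>g < 1\<close> have "m \<le> 0"
    by (simp add: mult_le_0_iff)
  then have "d x a = 0" for x a
    using d_le_m[of x a] by (simp add: d_def)
  then show ?thesis
    by (auto simp: d_def fun_eq_iff)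
qed

lemma qpi_eqI:
  fixes q :: "'x::finite \<Rightarrow> 'a::finite \<Rightarrow> real"
  assumes "0 \<le> g" "g < 1" and "\<And>x a. q x a = r x a + g * Ppol P pol q x a"
  shows "qpi P r g pol = q"
  unfolding qpi_def
proof (rule the_equality)
  show "\<forall>x a. q x a = r x a + g * Ppol P pol q x a"
    using assms(3) by blast
  show "q' = q" if "\<forall>x a. q' x a = r x a + g * Ppol P pol q' x a" for q'
    using that assms(3) by (intro Ppol_fixed_point_unique[OF assms(1,2)]) auto
qed

lemma (in prob_space) integral_sq_diff_const:
  fixes X :: "'a \<Rightarrow> real"
  assumes "integrable M X" "integrable M (\<lambda>x. (X x)\<^sup>2)"
  shows "(\<integral>x. (X x - c)\<^sup>2 \<partial>M) = variance X + (expectation X - c)\<^sup>2"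
  using assms by (simp add: variance_eq power2_diff prob_space algebra_simps power2_eq_square)

lemma map_pmf_table_pmf_component: "map_pmf (\<lambda>u. u (x, a)) (table_pmf P) = P x a"
  unfolding table_pmf_def by (subst Pi_pmf_component) auto

lemma integral_table_pmf_component:
  "(\<integral>u. H (u (x, a)) \<partial>table_pmf P) = Pop P H x a"
proof -
  have "(\<integral>u. H (u (x, a)) \<partial>table_pmf P) = (\<integral>y. H y \<partial>P x a)"
    by (simp flip: map_pmf_table_pmf_component)
  also have "\<dots> = Pop P H x a"
    by (subst integral_measure_pmf[of UNIV]) (auto simp: Pop_def)
  finally show ?thesis .
qed

lemma sequence_space_table_pmf: "sequence_space (measure_pmf (table_pmf P))"
  unfolding sequence_space_def product_prob_space_def product_sigma_finite_def
    product_prob_space_axioms_def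
  by (auto intro: measure_pmf.prob_space_axioms prob_space_imp_sigma_finite)

lemma prob_space_path_space: "prob_space (path_space P)"
proof -
  interpret sequence_space "table_pmf P" by (rule sequence_space_table_pmf)
  show ?thesis unfolding path_space_def by (rule P.prob_space_axioms)
qed

lemma (in sequence_space) integral_PiM_split_head:
  fixes G :: "'a \<Rightarrow> (nat \<Rightarrow> 'a) \<Rightarrow> real"
  assumes G: "integrable (M \<Otimes>\<^sub>M S) (\<lambda>(s, \<omega>). G s \<omega>)"
  shows "(\<integral>\<omega>. G (\<omega> 0) (\<lambda>t. \<omega> (Suc t)) \<partial>S) = (\<integral>s. (\<integral>\<omega>. G s \<omega> \<partial>S) \<partial>M)"
proof -
  interpret MS: pair_sigma_finite M S ..
  have "(\<lambda>\<omega> t. \<omega> (Suc t)) \<in> S \<rightarrow>\<^sub>M S"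
    by (rule measurable_PiM_single') (auto simp: space_PiM)
  then have "(\<lambda>\<omega>. (\<omega> 0, \<lambda>t. \<omega> (Suc t))) \<in> S \<rightarrow>\<^sub>M M \<Otimes>\<^sub>M S"
    by (intro measurable_Pair measurable_component_singleton) auto
  from measurable_comp[OF this borel_measurable_integrable[OF G]]
  have "(\<lambda>\<omega>. G (\<omega> 0) (\<lambda>t. \<omega> (Suc t))) \<in> borel_measurable S"
    by (simp add: comp_def)
  then have "(\<integral>\<omega>. G (\<omega> 0) (\<lambda>t. \<omega> (Suc t)) \<partial>S) = (\<integral>(s, \<omega>). G s \<omega> \<partial>(M \<Otimes>\<^sub>M S))"
    by (subst (1) PiM_iter[symmetric], subst integral_distr) (auto simp: split_beta')
  also have "\<dots> = (\<integral>s. (\<integral>\<omega>. G s \<omega> \<partial>S) \<partial>M)"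
    by (rule MS.integral_fst[OF G, symmetric])
  finally show ?thesis .
qed

lemma integral_path_space_step:
  fixes G :: "'x::finite \<Rightarrow> (nat \<Rightarrow> 'x \<times> 'a::finite \<Rightarrow> 'x) \<Rightarrow> real"
  assumes meas: "\<And>y. G y \<in> borel_measurable (path_space P)"
    and bound: "\<And>y w. \<bar>G y w\<bar> \<le> B"
  shows "(\<integral>w. G (w 0 (x, a)) (\<lambda>t. w (Suc t)) \<partial>path_space P)
    = Pop P (\<lambda>y. \<integral>w. G y w \<partial>path_space P) x a"
proof -
  interpret sequence_space "table_pmf P" by (rule sequence_space_table_pmf)
  interpret TS: prob_space "table_pmf P \<Otimes>\<^sub>M S"
    by (intro prob_space_pair P.prob_space_axioms measure_pmf.prob_space_axioms)
  have "(\<lambda>z. G (fst z (x, a)) (snd z)) \<in> borel_measurable (table_pmf P \<Otimes>\<^sub>M S)"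
  proof (rule measurable_compose_countable[where f = "\<lambda>y z. G y (snd z)"])
    show "(\<lambda>z. G y (snd z)) \<in> borel_measurable (table_pmf P \<Otimes>\<^sub>M S)" for y
      using meas[of y] unfolding path_space_def by measurable
    show "(\<lambda>z. fst z (x, a)) \<in> table_pmf P \<Otimes>\<^sub>M S \<rightarrow>\<^sub>M count_space UNIV"
      by (rule measurable_compose[OF measurable_fst]) simp
  qed
  then have "integrable (table_pmf P \<Otimes>\<^sub>M S) (\<lambda>(u, w). G (u (x, a)) w)"
    by (intro TS.integrable_const_bound[where B = B]) (auto simp: split_beta' bound)
  from integral_PiM_split_head[OF this]
  have "(\<integral>w. G (w 0 (x, a)) (\<lambda>t. w (Suc t)) \<partial>S) = (\<integral>u. (\<integral>w. G (u (x, a)) w \<partial>S) \<partial>table_pmf P)" .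
  then show ?thesis
    using integral_table_pmf_component[where H = "\<lambda>y. \<integral>w. G y w \<partial>S"]
    by (simp add: path_space_def)
qed

lemma discounted_sum_bounded:
  fixes g :: real
  assumes "0 \<le> g" "g < 1" and f: "\<And>t. \<bar>f t\<bar> \<le> 1"
  shows "summable (\<lambda>t. g ^ t * f t)" and "\<bar>\<Sum>t. g ^ t * f t\<bar> \<le> 1 / (1 - g)"
proof -
  have le: "\<bar>g ^ t * f t\<bar> \<le> g ^ t" for t
    using mult_left_mono[OF f, of "g ^ t"] \<open>0 \<le> g\<close> by (simp add: abs_mult)
  have geom: "summable (\<lambda>t. g ^ t)"
    using assms by (simp add: summable_geometric)
  have abs_summable: "summable (\<lambda>t. norm (g ^ t * f t))"
    by (rule summable_comparison_test'[OF geom]) (simp add: le)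
  then show "summable (\<lambda>t. g ^ t * f t)"
    by (rule summable_norm_cancel)
  have "\<bar>\<Sum>t. g ^ t * f t\<bar> \<le> (\<Sum>t. norm (g ^ t * f t))"
    using summable_norm[OF abs_summable] by simp
  also have "\<dots> \<le> (\<Sum>t. g ^ t)"
    by (rule suminf_le[OF _ abs_summable geom]) (simp add: le)
  also have "\<dots> = 1 / (1 - g)"
    using assms by (simp add: suminf_geometric)
  finally show "\<bar>\<Sum>t. g ^ t * f t\<bar> \<le> 1 / (1 - g)" .
qed

lemma traj_Suc_shift:
  "traj pols k x a w (Suc t) =
    traj pols (k - 1) (w 0 (x, a)) (pols (k - 1) (w 0 (x, a))) (\<lambda>t. w (Suc t)) t"
  by (induction t) (auto simp: act_def Let_def)

lemma measurable_traj: "(\<lambda>w. traj pols k x a w t) \<in> path_space P \<rightarrow>\<^sub>M count_space UNIV"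
proof (induction t)
  case 0
  then show ?case by simp
next
  case (Suc t)
  have "(\<lambda>w. w t) \<in> path_space P \<rightarrow>\<^sub>M count_space UNIV"
    using measurable_component_singleton[of t UNIV "\<lambda>_. measure_pmf (table_pmf P)"]
    by (simp add: path_space_def)
  then have "(\<lambda>w. (w t z, act pols k (Suc t) (w t z))) \<in> path_space P \<rightarrow>\<^sub>M count_space UNIV" for z
    by (rule measurable_compose) simp
  from measurable_compose_countable[OF this Suc] show ?case
    by (simp add: Let_def)
qed

definition disc_return ::
    "(nat \<Rightarrow> 'x \<Rightarrow> 'a) \<Rightarrow> ('x \<Rightarrow> 'a \<Rightarrow> real) \<Rightarrow> real \<Rightarrow> nat \<Rightarrow> 'x \<Rightarrow> 'a
      \<Rightarrow> (nat \<Rightarrow> 'x \<times> 'a \<Rightarrow> 'x) \<Rightarrow> real" where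
  "disc_return pols r g k x a w = (\<Sum>t. g ^ t * case_prod r (traj pols k x a w t))"

lemma borel_measurable_disc_return:
  "disc_return pols r g k x a \<in> borel_measurable (path_space P)"
proof -
  have "(\<lambda>w. g ^ t * case_prod r (traj pols k x a w t)) \<in> borel_measurable (path_space P)" for t
    by (rule measurable_compose[OF measurable_traj]) simp
  then show ?thesis
    unfolding disc_return_def[abs_def] by (rule borel_measurable_suminf)
qed

context
  fixes r :: "'x::finite \<Rightarrow> 'a::finite \<Rightarrow> real" and g :: real
  assumes g: "0 \<le> g" "g < 1" and r: "\<And>x a. \<bar>r x a\<bar> \<le> 1"
begin

lemma abs_disc_return_le: "\<bar>disc_return pols r g k x a w\<bar> \<le> 1 / (1 - g)"
  unfolding disc_return_def by (rule discounted_sum_bounded(2)[OF g]) (simp add: r split_beta)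

lemma disc_return_Suc_shift:
  "disc_return pols r g k x a w =
    r x a + g * disc_return pols r g (k - 1) (w 0 (x, a)) (pols (k - 1) (w 0 (x, a)))
      (\<lambda>t. w (Suc t))"
proof -
  let ?f = "\<lambda>t. g ^ t * case_prod r (traj pols k x a w t)"
  have "summable ?f"
    by (rule discounted_sum_bounded(1)[OF g]) (simp add: r split_beta)
  from suminf_split_head[OF this]
  have "disc_return pols r g k x a w = ?f 0 + (\<Sum>t. ?f (Suc t))"
    unfolding disc_return_def by (simp del: traj.simps(2))
  also have "(\<Sum>t. ?f (Suc t)) =
      g * disc_return pols r g (k - 1) (w 0 (x, a)) (pols (k - 1) (w 0 (x, a))) (\<lambda>t. w (Suc t))"
    unfolding disc_return_def traj_Suc_shift power_Suc mult.assoc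
    by (rule suminf_mult[OF discounted_sum_bounded(1)[OF g]]) (simp add: r split_beta)
  finally show ?thesis by simp
qed

lemma abs_disc_return_dev_le:
  "\<bar>(disc_return pols r g k x a w - c) ^ n\<bar> \<le> (1 / (1 - g) + \<bar>c\<bar>) ^ n"
  unfolding power_abs
  by (intro power_mono order_trans[OF abs_triangle_ineq4] add_mono abs_disc_return_le) auto

lemma integrable_disc_return:
  "integrable (path_space P) (\<lambda>w. (disc_return pols r g k x a w - c) ^ n)"
proof -
  interpret prob_space "path_space P" by (rule prob_space_path_space)
  have "disc_return pols r g k x a \<in> borel_measurable (path_space P)"
    by (rule borel_measurable_disc_return)
  then show ?thesis
    by (intro integrable_const_bound[where B = "(1 / (1 - g) + \<bar>c\<bar>) ^ n"] AE_I2)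
      (auto intro: abs_disc_return_dev_le)
qed

text \<open>For k = 0 the truncated k - 1 is 0 again, and this is the fixed-point equation of
  q^{\<pi>_0}.\<close>

lemma integral_disc_return_rec:
  "(\<integral>w. disc_return pols r g k x a w \<partial>path_space P) =
    r x a + g * Ppol P (pols (k - 1))
      (\<lambda>y b. \<integral>w. disc_return pols r g (k - 1) y b w \<partial>path_space P) x a"
proof -
  interpret prob_space "path_space P" by (rule prob_space_path_space)
  let ?R = "\<lambda>y. disc_return pols r g (k - 1) y (pols (k - 1) y)"
  have integrable: "integrable (path_space P) (?R y)" for y
    using integrable_disc_return[where c = 0 and n = 1] by simp
  have integral_affine:
    "(\<integral>w. r x a + g * ?R y w \<partial>path_space P) = r x a + g * (\<integral>w. ?R y w \<partial>path_space P)" for y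
    using integrable[of y] by (subst Bochner_Integration.integral_add) (auto simp: prob_space)
  have bound: "\<bar>r x a + g * ?R y w\<bar> \<le> 1 + g * (1 / (1 - g))" for y w
  proof -
    have "\<bar>r x a + g * ?R y w\<bar> \<le> \<bar>r x a\<bar> + g * \<bar>?R y w\<bar>"
      using abs_triangle_ineq[of "r x a" "g * ?R y w"] g(1) by (simp add: abs_mult)
    also have "\<dots> \<le> 1 + g * (1 / (1 - g))"
      using r abs_disc_return_le g(1) by (intro add_mono mult_left_mono) auto
    finally show ?thesis .
  qed
  have "(\<integral>w. disc_return pols r g k x a w \<partial>path_space P)
      = (\<integral>w. r x a + g * ?R (w 0 (x, a)) (\<lambda>t. w (Suc t)) \<partial>path_space P)"
    by (simp only: disc_return_Suc_shift[of pols k x a])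
  also have "\<dots> = Pop P (\<lambda>y. \<integral>w. r x a + g * ?R y w \<partial>path_space P) x a"
  proof (rule integral_path_space_step)
    show "(\<lambda>w. r x a + g * ?R y w) \<in> borel_measurable (path_space P)" for y
      by (intro borel_measurable_add borel_measurable_times borel_measurable_const
          borel_measurable_disc_return)
  qed (rule bound)
  also have "\<dots> = Pop P (\<lambda>y. r x a + g * (\<integral>w. ?R y w \<partial>path_space P)) x a"
    by (simp only: integral_affine)
  finally show ?thesis
    by (simp add: Pop_add Pop_cmult Ppol_def polv_def[abs_def])
qed

lemma integral_disc_return_eq_qprime:
  "(\<integral>w. disc_return pols r g k x a w \<partial>path_space P) = qprime P r g pols k x a"
proof (induction k arbitrary: x a)
  case 0
  have "(\<integral>w. disc_return pols r g 0 x a w \<partial>path_space P) =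
      r x a + g * Ppol P (pols 0) (\<lambda>y b. \<integral>w. disc_return pols r g 0 y b w \<partial>path_space P) x a"
    for x a
    using integral_disc_return_rec[where k = 0] unfolding diff_0_eq_0 .
  then have "qpi P r g (pols 0) = (\<lambda>x a. \<integral>w. disc_return pols r g 0 x a w \<partial>path_space P)"
    by (rule qpi_eqI[OF g])
  then show ?case by simp
next
  case (Suc k)
  then have "(\<lambda>y b. \<integral>w. disc_return pols r g k y b w \<partial>path_space P) = qprime P r g pols k"
    by (intro ext)
  then show ?case
    by (simp add: integral_disc_return_rec[where k = "Suc k"] Ppol_def)
qed

lemma integral_sq_dev_disc_return:
  "(\<integral>w. (disc_return pols r g k y (pols k y) w - c)\<^sup>2 \<partial>path_space P)
    = Sigma2 P r g pols k y (pols k y) + (vprime P r g pols k y - c)\<^sup>2"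
proof -
  interpret prob_space "path_space P" by (rule prob_space_path_space)
  let ?R = "disc_return pols r g k y (pols k y)"
  have mean: "expectation ?R = vprime P r g pols k y"
    by (simp add: integral_disc_return_eq_qprime vprime_def polv_def)
  have "integrable (path_space P) ?R" "integrable (path_space P) (\<lambda>w. (?R w)\<^sup>2)"
    using integrable_disc_return[where c = 0 and n = 1]
      integrable_disc_return[where c = 0 and n = 2]
    by simp_all
  then have "(\<integral>w. (?R w - c)\<^sup>2 \<partial>path_space P) = variance ?R + (expectation ?R - c)\<^sup>2"
    by (rule integral_sq_diff_const)
  also have "\<dots> = Sigma2 P r g pols k y (pols k y) + (vprime P r g pols k y - c)\<^sup>2"
    unfolding Sigma2_def disc_return_def[symmetric] mean by (simp add: vprime_def polv_def)
  finally show ?thesis .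
qed

end

theorem lemma23:
  fixes P :: "'x::finite \<Rightarrow> 'a::finite \<Rightarrow> 'x pmf"
    and r :: "'x \<Rightarrow> 'a \<Rightarrow> real"
    and g :: real
    and pols :: "nat \<Rightarrow> 'x \<Rightarrow> 'a"
    and K k :: nat
  assumes "0 \<le> g" "g < 1"
    and "\<And>x a. \<bar>r x a\<bar> \<le> 1"
    and "1 \<le> k" "k \<le> K"
  shows "Sigma2 P r g pols k x a =
           g\<^sup>2 * sigma2 P r g pols k x a
           + g\<^sup>2 * Ppol P (pols (k - 1)) (Sigma2 P r g pols (k - 1)) x a"
proof -
  obtain j where k: "k = Suc j" using \<open>1 \<le> k\<close> by (cases k) auto
  define v where "v = vprime P r g pols j"
  define c where "c = Pop P v x a"
  let ?R = "\<lambda>y. disc_return pols r g j y (pols j y)"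
  let ?G = "\<lambda>y w. g\<^sup>2 * (?R y w - c)\<^sup>2"
  have "Sigma2 P r g pols k x a = (\<integral>w. ?G (w 0 (x, a)) (\<lambda>t. w (Suc t)) \<partial>path_space P)"
    unfolding Sigma2_def disc_return_def[symmetric]
      disc_return_Suc_shift[where r = r, OF assms(1-3), where k = k]
    by (simp add: k c_def v_def vprime_def power2_eq_square algebra_simps)
  also have "\<dots> = Pop P (\<lambda>y. \<integral>w. ?G y w \<partial>path_space P) x a"
  proof (rule integral_path_space_step)
    show "?G y \<in> borel_measurable (path_space P)" for y
      by (intro borel_measurable_times borel_measurable_power borel_measurable_diff
          borel_measurable_const borel_measurable_disc_return)
    show "\<bar>?G y w\<bar> \<le> g\<^sup>2 * (1 / (1 - g) + \<bar>c\<bar>)\<^sup>2" for y w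
      using abs_disc_return_dev_le[where r = r, OF assms(1-3), where n = 2]
      by (simp add: abs_mult mult_left_mono)
  qed
  also have "\<dots> = Pop P (\<lambda>y. g\<^sup>2 * (Sigma2 P r g pols j y (pols j y) + (v y - c)\<^sup>2)) x a"
    by (simp add: integral_sq_dev_disc_return[where r = r, OF assms(1-3)] v_def)
  also have "\<dots> = g\<^sup>2 * Ppol P (pols j) (Sigma2 P r g pols j) x a + g\<^sup>2 * sigma2 P r g pols k x a"
    by (simp add: Pop_add Pop_cmult Pop_sq_dev sigma2_def k Ppol_def polv_def[abs_def] c_def v_def
        vprime_def distrib_left)
  finally show ?thesis
    by (simp add: k)
qed

end
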